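(* Let $M_1$ and $M_2$ be 1-dimensional complex submanifolds of $\mathbb{C}^2$ with $M_1\cap M_2=\{p\}$ and $T_pM_1=T_pM_2$. Choose affine coordinates $(x,y)$ centered at $p$ and $r>0$ such that near $p$, $M_1$ and $M_2$ are the graphs over $\{|x|<r\}$ of holomorphic functions $h_1,h_2$. Then there exist $0<r'\le r$ and $\delta>0$ such that: if $M_1'$ is the graph $\{y=g(x):|x|<r\}$ of a holomorphic function $g$ with $\sup_{|x|<r}|g-h_1|<\delta$ and $M_1'\cap M_1=\emptyset$, then $M_1'$ intersects $\{y=h_2(x):|x|<r'\}$, and every intersection point of $M_1'$ with $\{y=h_2(x):|x|<r'\}$ is transversal (non-tangential). *)

theory Defs
  imports "HOL-Complex_Analysis.Complex_Analysis"
begin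

end

theory Submission
  imports Defs
begin

(* With f = h1 - h2 = x^m k, k(0) \<noteq> 0, and u = g - h1, the intersection points are the zeros
   of f + u. On a small circle |f| exceeds 2 sup |u|, while at the centre |f + u| = |u|, so the
   minimum modulus principle gives a zero. Since u has no zeros, u = w^m with |w| \<le> c^(1/m), and
   Cauchy's estimate bounds |w'| by O(c^(1/m)). At a tangential zero x0 both x0^m k + w^m and its
   derivative vanish; eliminating between the two equations gives |w| \<le> 2 |x0| |w'| as long as
   x k'/k is small, hence |k(x0)| \<le> (2 |w'(x0)|)^m = O(c), which is impossible for small c
   because |k| is bounded below near 0. *)

lemma isolated_zero_factorization:
  fixes f :: "complex \<Rightarrow> complex"
  assumes "0 < r" "f holomorphic_on ball 0 r" "f 0 = 0" "\<forall>x\<in>ball 0 r. f x = 0 \<longrightarrow> x = 0"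
  obtains m R k where "0 < m" "0 < R" "R \<le> r" "k holomorphic_on ball 0 R"
    "\<And>x. x \<in> ball 0 R \<Longrightarrow> f x = x ^ m * k x" "\<And>x. x \<in> ball 0 R \<Longrightarrow> k x \<noteq> 0"
proof -
  have nonconst: "\<not> f constant_on ball 0 r"
  proof
    assume "f constant_on ball 0 r"
    moreover have "0 \<in> ball (0::complex) r" "complex_of_real (r/2) \<in> ball 0 r"
      using \<open>0 < r\<close> by auto
    ultimately have "f (r/2) = f 0"
      unfolding constant_on_def by force
    then show False
      using assms(3,4) \<open>complex_of_real (r/2) \<in> ball 0 r\<close> \<open>0 < r\<close> by auto
  qed
  show thesis
  proof (rule holomorphic_factor_zero_nonconstant[OF assms(2) open_ball connected_ball _ assms(3) nonconst])
    show "0 \<in> ball (0::complex) r"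
      using \<open>0 < r\<close> by simp
    fix k R m
    assume "0 < m" "0 < R" "ball (0::complex) R \<subseteq> ball 0 r" "k holomorphic_on ball 0 R"
      "\<And>x. x \<in> ball 0 R \<Longrightarrow> f x = (x - 0) ^ m * k x" "\<And>x. x \<in> ball 0 R \<Longrightarrow> k x \<noteq> 0"
    moreover from \<open>ball 0 R \<subseteq> ball 0 r\<close> \<open>0 < R\<close> have "R \<le> r"
      by (simp add: ball_subset_ball_iff)
    ultimately show thesis
      using that[of m R k] by simp
  qed
qed

lemma nonvanishing_holomorphic_local_bounds:
  fixes k :: "complex \<Rightarrow> complex"
  assumes "0 < R" "k holomorphic_on ball 0 R" "\<forall>x\<in>ball 0 R. k x \<noteq> 0"
  obtains s a where "0 < s" "s \<le> R" "0 < a"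
    "\<And>x. x \<in> ball 0 s \<Longrightarrow> a \<le> norm (k x) \<and> 2 * norm x * norm (deriv k x) \<le> norm (k x)"
proof -
  have K: "compact (cball (0::complex) (R/2))" "cball (0::complex) (R/2) \<subseteq> ball 0 R"
    using \<open>0 < R\<close> by auto
  then have "continuous_on (cball 0 (R/2)) k" "continuous_on (cball 0 (R/2)) (deriv k)"
    using holomorphic_on_subset[OF assms(2)] holomorphic_on_subset[OF holomorphic_deriv[OF assms(2) open_ball]]
    by (auto intro: holomorphic_on_imp_continuous_on)
  moreover have "cball (0::complex) (R/2) \<noteq> {}"
    using \<open>0 < R\<close> by simp
  ultimately obtain x1 x2 where x12: "x1 \<in> cball 0 (R/2)" "x2 \<in> cball 0 (R/2)"
    and min: "\<And>x. x \<in> cball 0 (R/2) \<Longrightarrow> norm (k x1) \<le> norm (k x)"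
    and max: "\<And>x. x \<in> cball 0 (R/2) \<Longrightarrow> norm (deriv k x) \<le> norm (deriv k x2)"
    using continuous_attains_inf[OF K(1) _ continuous_on_norm[of _ k]]
      continuous_attains_sup[OF K(1) _ continuous_on_norm[of _ "deriv k"]] by metis
  define a where "a = norm (k x1)"
  define B where "B = norm (deriv k x2) + 1"
  define s where "s = min (R/2) (a / (2 * B))"
  have "0 < a" "0 < B"
    using assms(3) x12 K(2) by (auto simp: a_def B_def add_nonneg_pos)
  show thesis
  proof
    show "0 < s" "s \<le> R" "0 < a"
      using \<open>0 < a\<close> \<open>0 < B\<close> \<open>0 < R\<close> by (auto simp: s_def)
    fix x :: complex assume "x \<in> ball 0 s"
    then have x: "x \<in> cball 0 (R/2)" "norm x \<le> a / (2 * B)"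
      by (auto simp: s_def)
    have "2 * norm x * norm (deriv k x) \<le> 2 * (a / (2 * B)) * B"
      using x max[of x] \<open>0 < a\<close> \<open>0 < B\<close> by (intro mult_mono) (auto simp: B_def)
    also have "\<dots> = a"
      using \<open>0 < B\<close> by simp
    finally show "a \<le> norm (k x) \<and> 2 * norm x * norm (deriv k x) \<le> norm (k x)"
      using min[OF x(1)] by (simp add: a_def)
  qed
qed

lemma isolated_zero_normal_form:
  fixes f :: "complex \<Rightarrow> complex"
  assumes "0 < r" "f holomorphic_on ball 0 r" "f 0 = 0" "\<forall>x\<in>ball 0 r. f x = 0 \<longrightarrow> x = 0"
    and "0 < \<epsilon>"
  obtains m s a k where "0 < m" "0 < s" "s \<le> r" "s \<le> \<epsilon>" "0 < a" "k holomorphic_on ball 0 s"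
    "\<And>x. x \<in> ball 0 s \<Longrightarrow> f x = x ^ m * k x"
    "\<And>x. x \<in> ball 0 s \<Longrightarrow> a \<le> norm (k x) \<and> 2 * norm x * norm (deriv k x) \<le> norm (k x)"
proof -
  obtain m R k where m: "0 < m" and R: "0 < R" "R \<le> r" and k: "k holomorphic_on ball 0 R"
    and f_k: "\<And>x. x \<in> ball 0 R \<Longrightarrow> f x = x ^ m * k x" and k_nz: "\<And>x. x \<in> ball 0 R \<Longrightarrow> k x \<noteq> 0"
    by (rule isolated_zero_factorization[OF assms(1-4)]) (rule that)
  have R': "0 < min R \<epsilon>" "ball 0 (min R \<epsilon>) \<subseteq> ball 0 R"
    using R \<open>0 < \<epsilon>\<close> by (auto intro: subset_ball)
  then have "\<forall>x\<in>ball 0 (min R \<epsilon>). k x \<noteq> 0"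
    using k_nz by blast
  then obtain s a where s: "0 < s" "s \<le> min R \<epsilon>" and "0 < a"
    and k_bounds: "\<And>x. x \<in> ball 0 s \<Longrightarrow> a \<le> norm (k x) \<and> 2 * norm x * norm (deriv k x) \<le> norm (k x)"
    by (rule nonvanishing_holomorphic_local_bounds[OF R'(1) holomorphic_on_subset[OF k R'(2)]])
      (rule that)
  have s_R: "ball 0 s \<subseteq> ball 0 R"
    using s by (intro subset_ball) simp
  show thesis
    by (rule that[OF m s(1) _ _ \<open>0 < a\<close> holomorphic_on_subset[OF k s_R] f_k k_bounds])
      (use s R s_R in auto)
qed

lemma holomorphic_nth_root_exists:
  assumes "convex A" "open A" "f holomorphic_on A" "\<And>x. x \<in> A \<Longrightarrow> f x \<noteq> 0" "0 < m"
  obtains w where "w holomorphic_on A" "\<And>x. x \<in> A \<Longrightarrow> w x ^ m = f x"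
proof (cases "A = {}")
  case False
  then obtain z where "z \<in> A" by blast
  then obtain L where L: "L holomorphic_on A" "\<And>x. x \<in> A \<Longrightarrow> exp (L x) = f x"
    using holomorphic_logarithm_exists assms by metis
  show ?thesis
  proof
    show "(\<lambda>x. exp (L x / of_nat m)) holomorphic_on A"
      using L(1) by (intro holomorphic_intros) auto
    show "exp (L x / of_nat m) ^ m = f x" if "x \<in> A" for x
      using L(2)[OF that] \<open>0 < m\<close> by (simp flip: exp_of_nat_mult)
  qed
qed (use that[of id] in simp)

lemma minimum_modulus_frontier_zero:
  fixes F :: "complex \<Rightarrow> complex"
  assumes "0 < \<rho>" "F holomorphic_on ball z \<rho>" "continuous_on (cball z \<rho>) F"
    and "\<And>x. dist z x = \<rho> \<Longrightarrow> b \<le> norm (F x)" and "norm (F z) < b"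
  shows "\<exists>x\<in>ball z \<rho>. F x = 0"
proof (rule ccontr)
  assume "\<not> ?thesis"
  moreover have "0 < b"
    using assms(5) norm_ge_zero[of "F z"] by linarith
  ultimately have nz: "F x \<noteq> 0" if "x \<in> cball z \<rho>" for x
    using that assms(4)[of x] by (cases "dist z x = \<rho>") auto
  have "norm (1 / F z) \<le> 1 / b"
  proof (rule maximum_modulus_frontier[where f = "\<lambda>x. 1 / F x" and S = "cball z \<rho>"])
    show "(\<lambda>x. 1 / F x) holomorphic_on interior (cball z \<rho>)"
      unfolding interior_cball using assms(2) nz by (intro holomorphic_intros) auto
    show "continuous_on (closure (cball z \<rho>)) (\<lambda>x. 1 / F x)"
      using assms(3) nz by (intro continuous_intros) auto
    show "norm (1 / F x) \<le> 1 / b" if "x \<in> frontier (cball z \<rho>)" for x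
      using that assms(4)[of x] \<open>0 < b\<close>
      by (auto simp: norm_divide intro!: frac_le)
  qed (use assms(1) in auto)
  then show False
    using assms(1,5) nz[of z] \<open>0 < b\<close> by (simp add: norm_divide divide_le_eq_1 field_simps)
qed

lemma perturbed_power_has_zero:
  fixes F k u :: "complex \<Rightarrow> complex"
  assumes "0 < m" "0 < s" "F holomorphic_on ball 0 s"
    and "\<And>x. x \<in> ball 0 s \<Longrightarrow> F x = x ^ m * k x + u x"
    and "\<And>x. x \<in> ball 0 s \<Longrightarrow> a \<le> norm (k x)" "\<And>x. x \<in> ball 0 s \<Longrightarrow> norm (u x) \<le> c"
    and "2 * c < a * (s / 2) ^ m"
  shows "\<exists>x\<in>ball 0 s. F x = 0"
proof -
  have sub: "cball 0 (s / 2) \<subseteq> ball (0::complex) s"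
    using \<open>0 < s\<close> by auto
  have "\<exists>x\<in>ball 0 (s / 2). F x = 0"
  proof (rule minimum_modulus_frontier_zero[where b = "a * (s / 2) ^ m - c"])
    show "F holomorphic_on ball 0 (s / 2)"
      using sub ball_subset_cball by (blast intro: holomorphic_on_subset[OF assms(3)])
    show "continuous_on (cball 0 (s / 2)) F"
      by (rule holomorphic_on_imp_continuous_on[OF holomorphic_on_subset[OF assms(3) sub]])
    show "a * (s / 2) ^ m - c \<le> norm (F x)" if "dist 0 x = s / 2" for x
    proof -
      have "norm x = s / 2" and x: "x \<in> ball 0 s"
        using that \<open>0 < s\<close> by simp_all
      have "a * (s / 2) ^ m \<le> norm (k x) * (s / 2) ^ m"
        using assms(5)[OF x] \<open>0 < s\<close> by (intro mult_right_mono) simp_all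
      also have "\<dots> = norm (x ^ m * k x)"
        by (simp only: norm_mult norm_power \<open>norm x = s / 2\<close> mult.commute)
      finally have "a * (s / 2) ^ m \<le> norm (x ^ m * k x)" .
      then show ?thesis
        unfolding assms(4)[OF x] using assms(6)[OF x] norm_diff_ineq[of "x ^ m * k x" "u x"] by linarith
    qed
    have "F 0 = u 0" "norm (u 0) \<le> c"
      using assms(1,2,4,6) by simp_all
    then show "norm (F 0) < a * (s / 2) ^ m - c"
      using assms(7) by simp
  qed (use \<open>0 < s\<close> in simp)
  then show ?thesis
    using sub ball_subset_cball by blast
qed

lemma Cauchy_deriv_estimate:
  fixes w :: "complex \<Rightarrow> complex"
  assumes "w holomorphic_on S" "cball z \<rho> \<subseteq> S" "0 < \<rho>" "\<And>x. x \<in> S \<Longrightarrow> norm (w x) \<le> M"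
  shows "norm (deriv w z) \<le> M / \<rho>"
proof -
  have "norm ((deriv ^^ 1) w z) \<le> fact 1 * M / \<rho> ^ 1"
  proof (rule Cauchy_inequality)
    show "w holomorphic_on ball z \<rho>"
      using assms(2) ball_subset_cball by (blast intro: holomorphic_on_subset[OF assms(1)])
    show "continuous_on (cball z \<rho>) w"
      by (rule holomorphic_on_imp_continuous_on[OF holomorphic_on_subset[OF assms(1,2)]])
    show "norm (w x) \<le> M" if "norm (z - x) = \<rho>" for x
      using that assms(2,4) by (simp add: subset_eq dist_norm)
  qed (fact \<open>0 < \<rho>\<close>)
  then show ?thesis
    by simp
qed

lemma power_tangency_bound:
  fixes x K K' W W' :: complex
  assumes "0 < m" "W \<noteq> 0"
    and vanish: "x ^ m * K + W ^ m = 0"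
    and slope: "of_nat m * x ^ (m - 1) * K + x ^ m * K' + of_nat m * W ^ (m - 1) * W' = 0"
    and small: "2 * norm x * norm K' \<le> norm K"
  shows "norm K \<le> (2 * norm W') ^ m"
proof -
  obtain n where m: "m = Suc n"
    using \<open>0 < m\<close> gr0_implies_Suc by blast
  have "x \<noteq> 0" "K \<noteq> 0"
    using vanish \<open>W \<noteq> 0\<close> by (auto simp: m)
  have "x ^ m * (W * (of_nat m * K + x * K') - of_nat m * x * K * W') =
      x * W * (of_nat m * x ^ (m - 1) * K + x ^ m * K' + of_nat m * W ^ (m - 1) * W')
      - of_nat m * x * W' * (x ^ m * K + W ^ m)"
    by (simp add: m algebra_simps)
  then have key: "W * (of_nat m * K + x * K') = of_nat m * x * K * W'"
    using vanish slope \<open>x \<noteq> 0\<close> by simp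
  have "norm K \<le> real m * norm K"
    using \<open>0 < m\<close> by (simp add: mult_le_cancel_right1)
  then have "real m * norm K / 2 \<le> norm (of_nat m * K + x * K')"
    using norm_diff_ineq[of "of_nat m * K" "x * K'"] small by (simp add: norm_mult)
  then have "norm W * (real m * norm K / 2) \<le> norm W * norm (of_nat m * K + x * K')"
    by (rule mult_left_mono) simp
  also have "\<dots> = real m * norm K * (norm x * norm W')"
    using arg_cong[OF key, of norm] by (simp add: norm_mult)
  finally have W: "norm W \<le> 2 * norm x * norm W'"
    using \<open>K \<noteq> 0\<close> \<open>0 < m\<close> by (simp add: field_simps)
  have "norm x ^ m * norm K = norm W ^ m"
    using arg_cong[OF vanish[unfolded add_eq_0_iff], of norm] by (simp add: norm_mult norm_power)
  also have "\<dots> \<le> norm x ^ m * (2 * norm W') ^ m"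
    using power_mono[OF W, of m] by (simp add: power_mult_distrib mult_ac)
  finally show ?thesis
    using \<open>x \<noteq> 0\<close> by simp
qed

lemma tangential_zero_bound:
  fixes F k u :: "complex \<Rightarrow> complex"
  assumes "0 < m" "0 < r" "s \<le> r / 2" "x0 \<in> ball 0 s"
    and "u holomorphic_on ball 0 r" "\<And>x. x \<in> ball 0 r \<Longrightarrow> u x \<noteq> 0"
    and "\<And>x. x \<in> ball 0 r \<Longrightarrow> norm (u x) \<le> c"
    and "k holomorphic_on ball 0 s" "\<And>x. x \<in> ball 0 s \<Longrightarrow> F x = x ^ m * k x + u x"
    and "F x0 = 0" "(F has_field_derivative 0) (at x0)"
    and "2 * norm x0 * norm (deriv k x0) \<le> norm (k x0)"
  shows "norm (k x0) \<le> (4 / r) ^ m * c"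
proof -
  obtain w where w: "w holomorphic_on ball 0 r" "\<And>x. x \<in> ball 0 r \<Longrightarrow> w x ^ m = u x"
    using holomorphic_nth_root_exists[OF convex_ball open_ball assms(5,6,1)] by blast
  have "norm (u 0) \<le> c"
    using assms(7) \<open>0 < r\<close> by simp
  then have "c \<ge> 0"
    by (rule order_trans[OF norm_ge_zero])
  have w_bound: "norm (w x) \<le> root m c" if "x \<in> ball 0 r" for x
  proof -
    have "norm (w x) ^ m \<le> root m c ^ m"
      using assms(7)[OF that] w(2)[OF that] \<open>0 < m\<close> \<open>c \<ge> 0\<close> by (simp flip: norm_power)
    then show ?thesis
      using \<open>0 < m\<close> \<open>c \<ge> 0\<close> by (meson norm_ge_zero power_mono_iff real_root_ge_zero)
  qed
  have s_r: "ball 0 s \<subseteq> ball 0 r"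
    using assms(2,3) by (intro subset_ball) simp
  then have x0_r: "x0 \<in> ball 0 r"
    using assms(4) by blast
  have x0_cball: "cball x0 (r / 2) \<subseteq> ball 0 r"
  proof
    fix y assume "y \<in> cball x0 (r / 2)"
    then show "y \<in> ball 0 r"
      using dist_triangle[of 0 y x0] assms(3,4) by simp
  qed
  have "norm (deriv w x0) \<le> root m c / (r / 2)"
    by (rule Cauchy_deriv_estimate[OF w(1) x0_cball _ w_bound]) (use \<open>0 < r\<close> in simp)
  then have w'_bound: "2 * norm (deriv w x0) \<le> 4 * root m c / r"
    by simp
  have F_eq: "F x = x ^ m * k x + w x ^ m" if "x \<in> ball 0 s" for x
    using assms(9)[OF that] w(2)[OF subsetD[OF s_r that]] by simp
  have "(F has_field_derivative
      of_nat m * x0 ^ (m - 1) * k x0 + x0 ^ m * deriv k x0 + of_nat m * w x0 ^ (m - 1) * deriv w x0) (at x0)"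
  proof (rule has_field_derivative_transform_within_open[where S = "ball 0 s"])
    show "((\<lambda>x. x ^ m * k x + w x ^ m) has_field_derivative
      of_nat m * x0 ^ (m - 1) * k x0 + x0 ^ m * deriv k x0 + of_nat m * w x0 ^ (m - 1) * deriv w x0) (at x0)"
      using DERIV_add[OF DERIV_mult'[OF DERIV_power[where n = m, OF DERIV_ident]
            holomorphic_derivI[OF assms(8) open_ball assms(4)]]
          DERIV_power[where n = m, OF holomorphic_derivI[OF w(1) open_ball x0_r]]]
      by (rule DERIV_cong) (simp add: algebra_simps)
  qed (use assms(4) F_eq in simp_all)
  then have slope:
    "of_nat m * x0 ^ (m - 1) * k x0 + x0 ^ m * deriv k x0 + of_nat m * w x0 ^ (m - 1) * deriv w x0 = 0"
    using DERIV_unique assms(11) by blast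
  have "w x0 \<noteq> 0"
    using w(2)[OF x0_r] assms(6)[OF x0_r] \<open>0 < m\<close> by (auto simp: power_0_left)
  then have "norm (k x0) \<le> (2 * norm (deriv w x0)) ^ m"
    using power_tangency_bound[OF \<open>0 < m\<close> _ _ slope assms(12)] F_eq[OF assms(4)] assms(10)
    by simp
  also have "\<dots> \<le> (4 * root m c / r) ^ m"
    by (intro power_mono w'_bound) simp
  also have "\<dots> = (4 / r) ^ m * c"
    using \<open>0 < m\<close> \<open>c \<ge> 0\<close> by (simp add: power_divide power_mult_distrib)
  finally show ?thesis .
qed

lemma perturbed_power_zeros_simple:
  fixes F k u :: "complex \<Rightarrow> complex"
  assumes "0 < m" "0 < r" "s \<le> r / 2" "F holomorphic_on ball 0 s" "k holomorphic_on ball 0 s"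
    and "\<And>x. x \<in> ball 0 s \<Longrightarrow> F x = x ^ m * k x + u x"
    and "\<And>x. x \<in> ball 0 s \<Longrightarrow> a \<le> norm (k x) \<and> 2 * norm x * norm (deriv k x) \<le> norm (k x)"
    and "u holomorphic_on ball 0 r" "\<forall>x\<in>ball 0 r. u x \<noteq> 0" "\<forall>x\<in>ball 0 r. norm (u x) \<le> c"
    and "c < a * (r / 4) ^ m"
    and "x0 \<in> ball 0 s" "F x0 = 0"
  shows "deriv F x0 \<noteq> 0"
proof
  assume "deriv F x0 = 0"
  then have "(F has_field_derivative 0) (at x0)"
    using holomorphic_derivI[OF assms(4) open_ball assms(12)] by simp
  then have "norm (k x0) \<le> (4 / r) ^ m * c"
    using tangential_zero_bound[OF assms(1-3,12,8) _ _ assms(5,6,13)] assms(7,9,10,12) by blast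
  also have "\<dots> < (4 / r) ^ m * (a * (r / 4) ^ m)"
    using assms(2,11) by simp
  also have "\<dots> = a * ((4 / r) * (r / 4)) ^ m"
    by (simp only: power_mult_distrib mult_ac)
  also have "\<dots> = a"
    using assms(2) by simp
  finally show False
    using assms(7,12) by fastforce
qed

lemma perturbed_graph_meets_transversally:
  fixes h1 h2 g k :: "complex \<Rightarrow> complex"
  assumes "0 < m" "0 < r" "0 < s" "s \<le> r / 2"
    and h1: "h1 holomorphic_on ball 0 r" and h2: "h2 holomorphic_on ball 0 r"
    and g: "g holomorphic_on ball 0 r"
    and k: "k holomorphic_on ball 0 s" and h_k: "\<And>x. x \<in> ball 0 s \<Longrightarrow> h1 x - h2 x = x ^ m * k x"
    and k_bounds: "\<And>x. x \<in> ball 0 s \<Longrightarrow> a \<le> norm (k x) \<and> 2 * norm x * norm (deriv k x) \<le> norm (k x)"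
    and g_h1: "\<forall>x\<in>ball 0 r. g x \<noteq> h1 x" and c: "\<forall>x\<in>ball 0 r. norm (g x - h1 x) \<le> c"
    and small_r: "c < a * (r / 4) ^ m" and small_s: "2 * c < a * (s / 2) ^ m"
  shows "(\<exists>x\<in>ball 0 s. g x = h2 x) \<and> (\<forall>x\<in>ball 0 s. g x = h2 x \<longrightarrow> deriv g x \<noteq> deriv h2 x)"
proof
  have s_r: "ball 0 s \<subseteq> ball 0 r"
    using assms(3,4) by (intro subset_ball) simp
  have u: "(\<lambda>x. g x - h1 x) holomorphic_on ball 0 r"
    using g h1 by (intro holomorphic_intros)
  have u_nz: "\<forall>x\<in>ball 0 r. g x - h1 x \<noteq> 0"
    using g_h1 by simp
  have F: "(\<lambda>x. g x - h2 x) holomorphic_on ball 0 s"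
    using g h2 s_r by (intro holomorphic_intros) (auto intro: holomorphic_on_subset)
  have F_eq: "g x - h2 x = x ^ m * k x + (g x - h1 x)" if "x \<in> ball 0 s" for x
    using h_k[OF that] by (simp add: algebra_simps)
  have "\<exists>x\<in>ball 0 s. g x - h2 x = 0"
    by (rule perturbed_power_has_zero[where a = a and c = c, OF assms(1,3) F F_eq])
      (use k_bounds c s_r small_s in blast)+
  then show "\<exists>x\<in>ball 0 s. g x = h2 x"
    by simp
  show "\<forall>x\<in>ball 0 s. g x = h2 x \<longrightarrow> deriv g x \<noteq> deriv h2 x"
  proof (intro ballI impI)
    fix x assume x: "x \<in> ball 0 s" and "g x = h2 x"
    then have "deriv (\<lambda>x. g x - h2 x) x \<noteq> 0"
      using perturbed_power_zeros_simple[OF assms(1,2,4) F k F_eq k_bounds u u_nz c small_r] by simp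
    moreover have "x \<in> ball 0 r"
      using s_r x by blast
    then have "g field_differentiable at x" "h2 field_differentiable at x"
      using holomorphic_on_imp_differentiable_at[OF _ open_ball] g h2 by blast+
    ultimately show "deriv g x \<noteq> deriv h2 x"
      by (simp add: deriv_diff)
  qed
qed

theorem lemma6p4:
  fixes h1 h2 :: "complex \<Rightarrow> complex" and r :: real
  assumes "r > 0"
    and "h1 holomorphic_on ball 0 r" and "h2 holomorphic_on ball 0 r"
    and "h1 0 = 0" and "h2 0 = 0"
    and "deriv h1 0 = deriv h2 0"
    and "\<forall>x\<in>ball 0 r. h1 x = h2 x \<longrightarrow> x = 0"
  shows "\<exists>r' \<delta>. 0 < r' \<and> r' \<le> r \<and> 0 < \<delta> \<and>
    (\<forall>g. g holomorphic_on ball 0 r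
        \<and> (\<exists>c<\<delta>. \<forall>x\<in>ball 0 r. cmod (g x - h1 x) \<le> c)
        \<and> (\<forall>x\<in>ball 0 r. g x \<noteq> h1 x)
      \<longrightarrow> (\<exists>x\<in>ball 0 r'. g x = h2 x)
        \<and> (\<forall>x\<in>ball 0 r'. g x = h2 x \<longrightarrow> deriv g x \<noteq> deriv h2 x))"
proof -
  have f: "(\<lambda>x. h1 x - h2 x) holomorphic_on ball 0 r"
    using assms(2,3) by (intro holomorphic_intros)
  have f_zero: "h1 0 - h2 0 = 0" and f_zero_iff: "\<forall>x\<in>ball 0 r. h1 x - h2 x = 0 \<longrightarrow> x = 0"
    using assms(4,5,7) by auto
  obtain m s a k where m: "0 < m" and s: "0 < s" "s \<le> r" "s \<le> r / 2" and "0 < a"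
    and k: "k holomorphic_on ball 0 s" and h_k: "\<And>x. x \<in> ball 0 s \<Longrightarrow> h1 x - h2 x = x ^ m * k x"
    and k_bounds: "\<And>x. x \<in> ball 0 s \<Longrightarrow> a \<le> norm (k x) \<and> 2 * norm x * norm (deriv k x) \<le> norm (k x)"
    by (rule isolated_zero_normal_form[OF assms(1) f f_zero f_zero_iff half_gt_zero[OF assms(1)]])
      (rule that)
  define \<delta> where "\<delta> = min (a * (r / 4) ^ m) (a * (s / 2) ^ m / 2)"
  have "0 < \<delta>"
    using s \<open>0 < a\<close> assms(1) by (simp add: \<delta>_def)
  moreover have "(\<exists>x\<in>ball 0 s. g x = h2 x) \<and> (\<forall>x\<in>ball 0 s. g x = h2 x \<longrightarrow> deriv g x \<noteq> deriv h2 x)"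
    if "g holomorphic_on ball 0 r" "c < \<delta>" "\<forall>x\<in>ball 0 r. cmod (g x - h1 x) \<le> c"
      "\<forall>x\<in>ball 0 r. g x \<noteq> h1 x" for g c
    using perturbed_graph_meets_transversally[OF m assms(1) s(1,3) assms(2,3) that(1) k h_k k_bounds
        that(4,3)] that(2)
    by (simp add: \<delta>_def)
  ultimately show ?thesis
    using s(1,2) by blast
qed

end
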